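(* Let $\widehat{\Sigma}\in\mathbb{R}^{p\times p}$ with $\widehat{\Sigma}\succeq 0$, let $\theta_0\in\mathbb{R}^p$ with $s_0=\|\theta_0\|_0$, and let $\xi>0$. Let $\widehat{\theta}^{\mathrm{ZN}}=\widehat{\theta}^{\mathrm{ZN}}(\xi)$ be a minimizer of $$\theta\mapsto \frac{1}{2}\langle \theta-\theta_0,\widehat{\Sigma}(\theta-\theta_0)\rangle+\xi\|\theta\|_1$$ over $\theta\in\mathbb{R}^p$. Then $$\|\widehat{\theta}^{\mathrm{ZN}}\|_0\le\Big(1+\frac{4\|\widehat{\Sigma}\|_2}{\widehat{\kappa}(s_0,1)}\Big)s_0 .$$
   Context: $\|\cdot\|_0$ counts nonzero entries; $\|\widehat\Sigma\|_2$ is the spectral norm. The restricted eigenvalue constant is $\widehat{\kappa}(s,c_0)=\min_{J\subseteq[p],|J|\le s}\ \min_{u\in\mathbb{R}^p,\ \|u_{J^c}\|_1\le c_0\|u_J\|_1}\frac{\langle u,\widehat{\Sigma}u\rangle}{\|u\|_2^2}$, where $u_J$ is the restriction of $u$ to the indices in $J$. In the paper $\widehat\Sigma={\mathbf X}^{\sf T}{\mathbf X}/n$ for a design matrix ${\mathbf X}\in\mathbb{R}^{n\times p}$. *)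

theory Defs
  imports "HOL-Analysis.Analysis"
begin

definition l0norm :: "real^'p \<Rightarrow> nat" where
  "l0norm x = card {i. x $ i \<noteq> 0}"

definition l1norm :: "real^'p \<Rightarrow> real" where
  "l1norm x = (\<Sum>i\<in>UNIV. \<bar>x $ i\<bar>)"

definition restr :: "'p set \<Rightarrow> real^'p \<Rightarrow> real^'p" where
  "restr J u = (\<chi> i. if i \<in> J then u $ i else 0)"

text \<open>Spectral norm = operator norm of x \<mapsto> S x w.r.t. the Euclidean norm.\<close>
definition spec_norm :: "real^'p^'p \<Rightarrow> real" where
  "spec_norm S = onorm (\<lambda>x. S *v x)"

text \<open>Restricted eigenvalue constant; u = 0 excluded since the ratio is undefined there.\<close>
definition re_const :: "real^'p^'p \<Rightarrow> nat \<Rightarrow> real \<Rightarrow> real" where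
  "re_const S s c0 = Inf {(u \<bullet> (S *v u)) / (norm u)^2 | J u.
      card J \<le> s \<and> u \<noteq> 0 \<and> l1norm (restr (- J) u) \<le> c0 * l1norm (restr J u)}"

definition lasso_obj :: "real^'p^'p \<Rightarrow> real^'p \<Rightarrow> real \<Rightarrow> real^'p \<Rightarrow> real" where
  "lasso_obj S theta0 xi theta =
     (1/2) * ((theta - theta0) \<bullet> (S *v (theta - theta0))) + xi * l1norm theta"

end

theory Submission
  imports Defs
begin

text \<open>Let \<open>v = thetaZN - theta0\<close> and \<open>q = \<langle>v, S v\<rangle>\<close>. At each coordinate \<open>i\<close> of
  the support of the minimizer, Fermat's rule gives \<open>|(S v)\<^sub>i| = xi\<close>; hence
  \<open>\<parallel>thetaZN\<parallel>\<^sub>0 xi\<^sup>2 \<le> \<parallel>S v\<parallel>\<^sup>2 \<le> \<parallel>S\<parallel>\<^sub>2 q\<close>, the last step being Cauchy-Schwarz for the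
  semi-inner product \<open>\<langle>x, S y\<rangle>\<close>. Comparing the objective at the minimizer and at \<open>theta0\<close>
  gives the basic inequality \<open>q + 2 xi \<parallel>v\<^sub>J\<^sub>c\<parallel>\<^sub>1 \<le> 2 xi \<parallel>v\<^sub>J\<parallel>\<^sub>1\<close>, \<open>J\<close> the support
  of \<open>theta0\<close>. So \<open>v\<close> lies in the restricted eigenvalue cone, and
  \<open>q\<^sup>2 \<le> 4 xi\<^sup>2 s\<^sub>0 \<parallel>v\<parallel>\<^sup>2 \<le> 4 xi\<^sup>2 s\<^sub>0 q / \<kappa>\<close>. The two bounds on \<open>q\<close> combine to
  \<open>\<kappa> \<parallel>thetaZN\<parallel>\<^sub>0 \<le> 4 \<parallel>S\<parallel>\<^sub>2 s\<^sub>0\<close>, slightly stronger than the claim.\<close>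

lemma inner_symmetric_matrix:
  fixes S :: "real^'n^'n"
  assumes "transpose S = S"
  shows "x \<bullet> (S *v y) = (S *v x) \<bullet> y"
  by (metis assms dot_lmul_matrix vector_transpose_matrix)

lemma quadratic_form_add:
  fixes S :: "real^'n^'n"
  assumes "transpose S = S"
  shows "(v + w) \<bullet> (S *v (v + w)) = v \<bullet> (S *v v) + 2 * (w \<bullet> (S *v v)) + w \<bullet> (S *v w)"
  using inner_symmetric_matrix[OF assms, of v w]
  by (simp add: matrix_vector_right_distrib inner_add_left inner_add_right inner_commute)

lemma nonneg_quadratic_discriminant:
  fixes a b c :: real
  assumes nonneg: "\<And>t. 0 \<le> a + 2 * t * b + t\<^sup>2 * c" and "0 \<le> c"
  shows "b\<^sup>2 \<le> a * c"
proof (cases "c = 0")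
  case True
  have "b = 0"
  proof (rule ccontr)
    assume "b \<noteq> 0"
    with nonneg[of "- (a + 1) / (2 * b)"] True show False by (simp add: field_simps)
  qed
  then show ?thesis using True by simp
next
  case False
  with \<open>0 \<le> c\<close> have "0 < c" by simp
  with nonneg[of "- b / c"] show ?thesis by (simp add: field_simps power2_eq_square)
qed

lemma psd_Cauchy_Schwarz:
  fixes S :: "real^'n^'n"
  assumes sym: "transpose S = S" and psd: "\<And>u. 0 \<le> u \<bullet> (S *v u)"
  shows "(x \<bullet> (S *v y))\<^sup>2 \<le> (x \<bullet> (S *v x)) * (y \<bullet> (S *v y))"
proof (rule nonneg_quadratic_discriminant)
  fix t :: real
  have "0 \<le> (x + t *\<^sub>R y) \<bullet> (S *v (x + t *\<^sub>R y))" by (rule psd)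
  also have "\<dots> = x \<bullet> (S *v x) + 2 * t * (x \<bullet> (S *v y)) + t\<^sup>2 * (y \<bullet> (S *v y))"
    using inner_symmetric_matrix[OF sym, of y x]
    by (simp add: quadratic_form_add[OF sym] matrix_vector_mult_scaleR inner_commute
        power2_eq_square algebra_simps)
  finally show "0 \<le> x \<bullet> (S *v x) + 2 * t * (x \<bullet> (S *v y)) + t\<^sup>2 * (y \<bullet> (S *v y))" .
qed (rule psd)

lemma spec_norm_nonneg: "0 \<le> spec_norm S"
  unfolding spec_norm_def by (rule onorm_pos_le[OF matrix_vector_mul_bounded_linear])

lemma norm_matrix_vector_le_spec_norm: "norm (S *v x) \<le> spec_norm S * norm x"
  unfolding spec_norm_def by (rule onorm[OF matrix_vector_mul_bounded_linear])

lemma psd_norm_sq_le: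
  fixes S :: "real^'n^'n"
  assumes sym: "transpose S = S" and psd: "\<And>u. 0 \<le> u \<bullet> (S *v u)"
  shows "(norm (S *v v))\<^sup>2 \<le> spec_norm S * (v \<bullet> (S *v v))"
proof -
  define w where "w = S *v v"
  have "((norm w)\<^sup>2)\<^sup>2 = (v \<bullet> (S *v w))\<^sup>2"
    by (simp add: w_def inner_symmetric_matrix[OF sym] power2_norm_eq_inner)
  also have "\<dots> \<le> (v \<bullet> (S *v v)) * (w \<bullet> (S *v w))"
    by (rule psd_Cauchy_Schwarz[OF sym psd])
  also have "\<dots> \<le> (v \<bullet> (S *v v)) * (spec_norm S * (norm w)\<^sup>2)"
  proof (rule mult_left_mono[OF _ psd])
    have "w \<bullet> (S *v w) \<le> norm w * norm (S *v w)" by (rule norm_cauchy_schwarz)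
    also have "\<dots> \<le> norm w * (spec_norm S * norm w)"
      by (simp add: mult_left_mono norm_matrix_vector_le_spec_norm)
    finally show "w \<bullet> (S *v w) \<le> spec_norm S * (norm w)\<^sup>2" by (simp add: power2_eq_square algebra_simps)
  qed
  finally have le: "(norm w)\<^sup>2 * (norm w)\<^sup>2 \<le> (norm w)\<^sup>2 * (spec_norm S * (v \<bullet> (S *v v)))"
    by (simp add: power2_eq_square algebra_simps)
  have "(norm w)\<^sup>2 \<le> spec_norm S * (v \<bullet> (S *v v))"
  proof (cases "w = 0")
    case True
    then show ?thesis by (simp add: spec_norm_nonneg psd)
  next
    case False
    then show ?thesis by (intro mult_left_le_imp_le[OF le]) simp
  qed
  then show ?thesis by (simp add: w_def)
qed

lemma l1norm_nonneg: "0 \<le> l1norm x"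
  unfolding l1norm_def by (simp add: sum_nonneg)

lemma l1norm_restr: "l1norm (restr J u) = (\<Sum>i\<in>J. \<bar>u $ i\<bar>)"
proof -
  have "l1norm (restr J u) = (\<Sum>i\<in>UNIV. if i \<in> J then \<bar>u $ i\<bar> else 0)"
    unfolding l1norm_def restr_def by (intro sum.cong) auto
  then show ?thesis by (simp add: sum.inter_restrict[symmetric])
qed

lemma l1norm_split: "l1norm u = l1norm (restr J u) + l1norm (restr (- J) u)"
proof -
  have "l1norm u = (\<Sum>i\<in>J \<union> - J. \<bar>u $ i\<bar>)"
    unfolding l1norm_def by simp
  also have "\<dots> = l1norm (restr J u) + l1norm (restr (- J) u)"
    unfolding l1norm_restr by (rule sum.union_disjoint) auto
  finally show ?thesis .
qed

lemma l1norm_add_axis: "l1norm (x + axis i t) = l1norm x + \<bar>x $ i + t\<bar> - \<bar>x $ i\<bar>"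
proof -
  have "(\<Sum>j\<in>- {i}. \<bar>(x + axis i t) $ j\<bar>) = (\<Sum>j\<in>- {i}. \<bar>x $ j\<bar>)"
    by (rule sum.cong) (auto simp: axis_def)
  then show ?thesis
    using l1norm_split[of "x + axis i t" "{i}"] l1norm_split[of x "{i}"]
    by (simp add: l1norm_restr)
qed

lemma sum_sq_coords_le_norm_sq: "(\<Sum>i\<in>J. (x $ i)\<^sup>2) \<le> (norm x)\<^sup>2"
proof -
  have "(\<Sum>i\<in>J. (x $ i)\<^sup>2) \<le> (\<Sum>i\<in>UNIV. (x $ i)\<^sup>2)"
    by (rule sum_mono2) auto
  also have "\<dots> = (norm x)\<^sup>2"
    unfolding power2_norm_eq_inner by (simp add: inner_vec_def power2_eq_square)
  finally show ?thesis .
qed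

lemma l1norm_restr_sq_le: "(l1norm (restr J u))\<^sup>2 \<le> real (card J) * (norm u)\<^sup>2"
proof -
  have "(l1norm (restr J u))\<^sup>2 \<le> (\<Sum>i\<in>J. (u $ i)\<^sup>2) * real (card J)"
    unfolding l1norm_restr using sum_squared_le_sum_of_squares[of "\<lambda>i. \<bar>u $ i\<bar>" J] by simp
  also have "\<dots> \<le> (norm u)\<^sup>2 * real (card J)"
    using sum_sq_coords_le_norm_sq by (rule mult_right_mono) simp
  finally show ?thesis by (simp add: mult.commute)
qed

lemma re_const_le_Rayleigh_quotient:
  fixes S :: "real^'n^'n"
  assumes psd: "\<And>u. 0 \<le> u \<bullet> (S *v u)" and "card J \<le> s"
    and cone: "l1norm (restr (- J) u) \<le> c0 * l1norm (restr J u)"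
  shows "re_const S s c0 * (norm u)\<^sup>2 \<le> u \<bullet> (S *v u)"
proof (cases "u = 0")
  case True
  then show ?thesis by simp
next
  case False
  let ?R = "{(u \<bullet> (S *v u)) / (norm u)^2 | J u.
      card J \<le> s \<and> u \<noteq> 0 \<and> l1norm (restr (- J) u) \<le> c0 * l1norm (restr J u)}"
  have "(u \<bullet> (S *v u)) / (norm u)\<^sup>2 \<in> ?R"
    using False \<open>card J \<le> s\<close> cone by blast
  moreover have "bdd_below ?R"
    by (rule bdd_belowI[of _ 0]) (auto intro: psd divide_nonneg_nonneg)
  ultimately have "re_const S s c0 \<le> (u \<bullet> (S *v u)) / (norm u)\<^sup>2"
    unfolding re_const_def by (rule cInf_lower)
  then show ?thesis using False by (simp add: field_simps)
qed

lemma DERIV_abs_add: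
  fixes m :: real
  assumes "m \<noteq> 0"
  shows "((\<lambda>t. \<bar>m + t\<bar>) has_real_derivative sgn m) (at 0)"
proof -
  have "norm = (abs :: real \<Rightarrow> real)" "(\<lambda>h. h * sgn m) = (*) (sgn m)"
    by (auto simp: fun_eq_iff)
  then have "(abs has_real_derivative sgn m) (at m)"
    using has_derivative_norm[OF assms] by (simp add: has_field_derivative_def)
  then show ?thesis
    using DERIV_shift[of abs "sgn m" 0 m] by (simp add: add.commute)
qed

lemma lasso_obj_add_axis:
  fixes S :: "real^'n^'n"
  assumes sym: "transpose S = S"
  shows "lasso_obj S theta0 xi (theta + axis i t) = lasso_obj S theta0 xi theta
           + t * (S *v (theta - theta0)) $ i + t\<^sup>2 / 2 * (axis i 1 \<bullet> (S *v axis i 1))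
           + xi * (\<bar>theta $ i + t\<bar> - \<bar>theta $ i\<bar>)"
proof -
  define v where "v = theta - theta0"
  have "axis i t = t *\<^sub>R axis i (1::real)"
    by (simp add: axis_def vec_eq_iff)
  then have "axis i t \<bullet> (S *v axis i t) = t\<^sup>2 * (axis i 1 \<bullet> (S *v axis i 1))"
    by (simp add: matrix_vector_mult_scaleR power2_eq_square)
  then have quad: "(v + axis i t) \<bullet> (S *v (v + axis i t))
      = v \<bullet> (S *v v) + 2 * (t * (S *v v) $ i) + t\<^sup>2 * (axis i 1 \<bullet> (S *v axis i 1))"
    by (simp add: quadratic_form_add[OF sym] inner_axis')
  have shift: "theta + axis i t - theta0 = v + axis i t"
    by (simp add: v_def algebra_simps)
  have "lasso_obj S theta0 xi (theta + axis i t)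
      = 1/2 * ((v + axis i t) \<bullet> (S *v (v + axis i t))) + xi * l1norm (theta + axis i t)"
    unfolding lasso_obj_def shift ..
  also have "\<dots> = lasso_obj S theta0 xi theta
           + t * (S *v v) $ i + t\<^sup>2 / 2 * (axis i 1 \<bullet> (S *v axis i 1))
           + xi * (\<bar>theta $ i + t\<bar> - \<bar>theta $ i\<bar>)"
    unfolding quad l1norm_add_axis lasso_obj_def v_def[symmetric] by (simp add: algebra_simps)
  finally show ?thesis by (simp add: v_def)
qed

lemma lasso_stationarity:
  fixes S :: "real^'n^'n"
  assumes sym: "transpose S = S"
    and minimizer: "\<And>theta. lasso_obj S theta0 xi thetaZN \<le> lasso_obj S theta0 xi theta"
    and nonzero: "thetaZN $ i \<noteq> 0"
  shows "(S *v (thetaZN - theta0)) $ i = - xi * sgn (thetaZN $ i)"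
proof -
  define g where "g = (S *v (thetaZN - theta0)) $ i"
  define d where "d = axis i 1 \<bullet> (S *v axis i (1::real))"
  define m where "m = thetaZN $ i"
  define f where "f t = lasso_obj S theta0 xi (thetaZN + axis i t)" for t
  have f_eq: "f = (\<lambda>t. lasso_obj S theta0 xi thetaZN + t * g + t\<^sup>2 / 2 * d + xi * (\<bar>m + t\<bar> - \<bar>m\<bar>))"
    by (simp add: fun_eq_iff f_def g_def d_def m_def lasso_obj_add_axis[OF sym])
  have "(f has_real_derivative g + xi * sgn m) (at 0)"
    unfolding f_eq using nonzero
    by (auto intro!: derivative_eq_intros DERIV_abs_add simp: m_def)
  moreover have "\<forall>t. \<bar>0 - t\<bar> < 1 \<longrightarrow> f 0 \<le> f t"
    unfolding f_def using minimizer by (metis add.right_neutral axis_eq_0_iff)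
  ultimately have "g + xi * sgn m = 0"
    by (rule DERIV_local_min[OF _ zero_less_one])
  then show ?thesis by (simp add: g_def m_def)
qed

lemma lasso_basic_inequality:
  fixes S :: "real^'n^'n"
  assumes le: "lasso_obj S theta0 xi theta \<le> lasso_obj S theta0 xi theta0" and "0 \<le> xi"
  shows "(theta - theta0) \<bullet> (S *v (theta - theta0))
           + 2 * xi * l1norm (restr (- {i. theta0 $ i \<noteq> 0}) (theta - theta0))
         \<le> 2 * xi * l1norm (restr {i. theta0 $ i \<noteq> 0} (theta - theta0))"
proof -
  define J where "J = {i. theta0 $ i \<noteq> 0}"
  define v where "v = theta - theta0"
  have off_support: "l1norm (restr (- J) theta) = l1norm (restr (- J) v)"
    "l1norm (restr (- J) theta0) = 0"
    by (simp_all add: l1norm_restr J_def v_def)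
  have "l1norm (restr J theta0) - l1norm (restr J theta) \<le> l1norm (restr J v)"
    unfolding l1norm_restr sum_subtractf[symmetric]
    by (rule sum_mono) (simp add: v_def abs_triangle_ineq3 abs_minus_commute)
  then have "l1norm theta0 - l1norm theta \<le> l1norm (restr J v) - l1norm (restr (- J) v)"
    using l1norm_split[of theta0 J] l1norm_split[of theta J] off_support by simp
  with \<open>0 \<le> xi\<close> have "xi * (l1norm theta0 - l1norm theta)
      \<le> xi * (l1norm (restr J v) - l1norm (restr (- J) v))"
    by (rule mult_left_mono[rotated])
  with le show ?thesis
    unfolding lasso_obj_def J_def[symmetric] v_def[symmetric] by (simp add: algebra_simps)
qed

lemma lasso_prediction_bound:
  fixes S :: "real^'n^'n"
  assumes psd: "\<And>u. 0 \<le> u \<bullet> (S *v u)" and xi_pos: "0 < xi"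
    and kappa_nonneg: "0 \<le> re_const S (l0norm theta0) 1"
    and le: "lasso_obj S theta0 xi theta \<le> lasso_obj S theta0 xi theta0"
  shows "re_const S (l0norm theta0) 1 * ((theta - theta0) \<bullet> (S *v (theta - theta0)))
           \<le> 4 * xi\<^sup>2 * real (l0norm theta0)"
proof -
  define J where "J = {i. theta0 $ i \<noteq> 0}"
  define v where "v = theta - theta0"
  define q where "q = v \<bullet> (S *v v)"
  define k where "k = re_const S (l0norm theta0) 1"
  define s0 where "s0 = real (l0norm theta0)"
  have q_nonneg: "0 \<le> q" unfolding q_def by (rule psd)
  have basic: "q + 2 * xi * l1norm (restr (- J) v) \<le> 2 * xi * l1norm (restr J v)"
    using lasso_basic_inequality[OF le] xi_pos by (simp add: J_def v_def q_def)
  moreover have "0 \<le> 2 * xi * l1norm (restr (- J) v)"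
    using xi_pos by (simp add: l1norm_nonneg)
  ultimately have q_le: "q \<le> 2 * xi * l1norm (restr J v)"
    by linarith
  have "xi * l1norm (restr (- J) v) \<le> xi * l1norm (restr J v)"
    using basic q_nonneg by simp
  then have cone: "l1norm (restr (- J) v) \<le> 1 * l1norm (restr J v)"
    using xi_pos by simp
  have card_J: "card J \<le> l0norm theta0" by (simp add: J_def l0norm_def)
  have RE: "k * (norm v)\<^sup>2 \<le> q"
    unfolding k_def q_def by (rule re_const_le_Rayleigh_quotient[OF psd card_J cone])
  have "q\<^sup>2 \<le> 4 * xi\<^sup>2 * (l1norm (restr J v))\<^sup>2"
    using power_mono[OF q_le q_nonneg, of 2] by (simp add: power_mult_distrib)
  also have "\<dots> \<le> 4 * xi\<^sup>2 * (s0 * (norm v)\<^sup>2)"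
    using l1norm_restr_sq_le[of J v] by (simp add: s0_def J_def l0norm_def mult_left_mono)
  finally have "k * q\<^sup>2 \<le> k * (4 * xi\<^sup>2 * (s0 * (norm v)\<^sup>2))"
    using kappa_nonneg by (simp add: k_def mult_left_mono)
  also have "\<dots> = 4 * xi\<^sup>2 * s0 * (k * (norm v)\<^sup>2)" by (simp add: algebra_simps)
  also have "\<dots> \<le> 4 * xi\<^sup>2 * s0 * q"
    using RE by (intro mult_left_mono) (auto simp: s0_def)
  finally have "(k * q) * q \<le> (4 * xi\<^sup>2 * s0) * q"
    by (simp add: power2_eq_square algebra_simps)
  then have "k * q \<le> 4 * xi\<^sup>2 * s0"
    using q_nonneg by (cases "q = 0") (auto simp: s0_def)
  then show ?thesis by (simp add: k_def s0_def q_def v_def)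
qed

lemma lasso_support_bound:
  fixes S :: "real^'n^'n"
  assumes sym: "transpose S = S" and psd: "\<And>u. 0 \<le> u \<bullet> (S *v u)" and "0 \<le> xi"
    and minimizer: "\<And>theta. lasso_obj S theta0 xi thetaZN \<le> lasso_obj S theta0 xi theta"
  shows "real (l0norm thetaZN) * xi\<^sup>2
           \<le> spec_norm S * ((thetaZN - theta0) \<bullet> (S *v (thetaZN - theta0)))"
proof -
  define T where "T = {i. thetaZN $ i \<noteq> 0}"
  define g where "g = S *v (thetaZN - theta0)"
  have "(g $ i)\<^sup>2 = xi\<^sup>2" if "i \<in> T" for i
    using lasso_stationarity[OF sym minimizer, of i] that
    by (simp add: T_def g_def power_mult_distrib sgn_if)
  then have "real (l0norm thetaZN) * xi\<^sup>2 = (\<Sum>i\<in>T. (g $ i)\<^sup>2)"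
    by (simp add: T_def l0norm_def)
  also have "\<dots> \<le> (norm g)\<^sup>2" by (rule sum_sq_coords_le_norm_sq)
  also have "\<dots> \<le> spec_norm S * ((thetaZN - theta0) \<bullet> (S *v (thetaZN - theta0)))"
    unfolding g_def by (rule psd_norm_sq_le[OF sym psd])
  finally show ?thesis .
qed

theorem lemma2p1:
  fixes S :: "real^'p^'p" and theta0 thetaZN :: "real^'p" and xi :: real
  assumes sym: "transpose S = S"
    and psd: "\<And>u. u \<bullet> (S *v u) \<ge> 0"
    and xi_pos: "xi > 0"
    and kappa_pos: "re_const S (l0norm theta0) 1 > 0"
    and minimizer: "\<And>theta. lasso_obj S theta0 xi thetaZN \<le> lasso_obj S theta0 xi theta"
  shows "real (l0norm thetaZN)
           \<le> (1 + 4 * spec_norm S / re_const S (l0norm theta0) 1) * real (l0norm theta0)"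
proof -
  define k where "k = re_const S (l0norm theta0) 1"
  define q where "q = (thetaZN - theta0) \<bullet> (S *v (thetaZN - theta0))"
  define N where "N = real (l0norm thetaZN)"
  define s0 where "s0 = real (l0norm theta0)"
  have "k * (N * xi\<^sup>2) \<le> k * (spec_norm S * q)"
    using lasso_support_bound[OF sym psd _ minimizer] xi_pos kappa_pos
    by (simp add: k_def q_def N_def)
  also have "\<dots> = spec_norm S * (k * q)" by simp
  also have "\<dots> \<le> spec_norm S * (4 * xi\<^sup>2 * s0)"
    using lasso_prediction_bound[OF psd xi_pos _ minimizer] kappa_pos spec_norm_nonneg[of S]
    by (intro mult_left_mono) (simp_all add: k_def q_def s0_def)
  finally have "(k * N) * xi\<^sup>2 \<le> (4 * spec_norm S * s0) * xi\<^sup>2"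
    by (simp add: algebra_simps)
  then have "N \<le> 4 * spec_norm S * s0 / k"
    using xi_pos kappa_pos by (simp add: k_def field_simps)
  also have "\<dots> \<le> (1 + 4 * spec_norm S / k) * s0"
    by (simp add: s0_def algebra_simps)
  finally show ?thesis by (simp add: N_def k_def s0_def)
qed

end
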